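(* For every positive integer $k$ there is a constant $C_k>0$ such that the following holds. Let $r\in\mathbb{C}$, let $N$ be a positive integer, let $A=\{r, r+1,\ldots, r+N-1\}$, and let $B\subset\mathbb{C}$ be a finite set with $A\subseteq B.B=\{bb':b,b'\in B\}$. Let $G$ be a containment graph of $A$ in $B.B$. If $G$ contains a cycle of length $2k$, then $r$ is an algebraic number of degree at most $k$ and height at most $C_kN^k$.
   Context: Containment graph: given $A\subseteq B.B$, the containment graph $G(A,B.B)$ is the bipartite graph whose two colour classes are two disjoint copies of $B$, obtained by choosing for each $a\in A$ one fixed representation $a=b_1b_2$ with $b_1,b_2\in B$ and placing an edge between $b_1$ in the first copy and $b_2$ in the second copy (so it has $2|B|$ vertices and $|A|$ edges). The height of an integer polynomial is the largest absolute value of its coefficients. The height of an algebraic number $\alpha$ is the height of its primitive polynomial, i.e. the integer polynomial of minimal degree, and with leading coefficient minimal in absolute value, having $\alpha$ as a root. *)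

theory Defs
  imports Complex_Main "HOL-Computational_Algebra.Polynomial"
begin

definition int_poly_height :: "int poly \<Rightarrow> int" where
  "int_poly_height p = Max {\<bar>coeff p i\<bar> | i. i \<le> degree p}"

definition is_primitive_poly :: "complex \<Rightarrow> int poly \<Rightarrow> bool" where
  "is_primitive_poly \<alpha> p \<longleftrightarrow>
     p \<noteq> 0 \<and> poly (map_poly of_int p) \<alpha> = 0 \<and>
     (\<forall>q. q \<noteq> 0 \<and> poly (map_poly of_int q) \<alpha> = 0 \<longrightarrow>
        degree p \<le> degree q \<and>
        (degree q = degree p \<longrightarrow> \<bar>lead_coeff p\<bar> \<le> \<bar>lead_coeff q\<bar>))"

text \<open>Containment graph G(A,B.B) for the chosen representations rep a = (b1,b2):
  vertices are Inl b (first copy of B) and Inr b (second copy of B);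
  edges are {Inl b1, Inr b2} for a = b1 b2.\<close>
definition containment_adj ::
  "complex set \<Rightarrow> (complex \<Rightarrow> complex \<times> complex) \<Rightarrow> complex + complex \<Rightarrow> complex + complex \<Rightarrow> bool" where
  "containment_adj A rep x y \<longleftrightarrow>
     (\<exists>a\<in>A. (x = Inl (fst (rep a)) \<and> y = Inr (snd (rep a))) \<or>
            (y = Inl (fst (rep a)) \<and> x = Inr (snd (rep a))))"

definition has_cycle_of_length :: "('v \<Rightarrow> 'v \<Rightarrow> bool) \<Rightarrow> nat \<Rightarrow> bool" where
  "has_cycle_of_length adj m \<longleftrightarrow>
     3 \<le> m \<and> (\<exists>w :: nat \<Rightarrow> 'v. inj_on w {..<m} \<and> (\<forall>i<m. adj (w i) (w (Suc i mod m))))"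

end

theory Submission
  imports Defs "Berlekamp_Zassenhaus.Factor_Bound"
begin

text \<open>Label the vertices of a \<open>2k\<close>-cycle by their elements \<open>b\<^sub>0, \<dots>, b\<^sub>2\<^sub>k\<^sub>-\<^sub>1\<close> of \<open>B\<close>; the
  edges carry pairwise distinct elements \<open>r + n\<^sub>i = b\<^sub>i b\<^sub>i\<^sub>+\<^sub>1\<close> of \<open>A\<close>, \<open>0 \<le> n\<^sub>i < N\<close>. The
  product of the even-indexed edges and that of the odd-indexed edges both equal
  \<open>b\<^sub>0 \<cdots> b\<^sub>2\<^sub>k\<^sub>-\<^sub>1\<close>, so \<open>r\<close> is a root of
  \<open>Q = \<Prod>(x + n\<^sub>2\<^sub>j) - \<Prod>(x + n\<^sub>2\<^sub>j\<^sub>+\<^sub>1)\<close>, a nonzero integer polynomial of degree at most \<open>k\<close>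
  whose coefficients are bounded by \<open>N\<^sup>k\<close>. The primitive polynomial of \<open>r\<close> divides \<open>Q\<close>,
  so by Mignotte's bound and Landau's inequality its coefficients are at most
  \<open>2\<^sup>k \<parallel>Q\<parallel>\<^sub>2 \<le> 2\<^sup>k (k + 1) N\<^sup>k\<close>.\<close>

lemma is_primitive_poly_exists:
  fixes Q :: "int poly" and r :: complex
  assumes "Q \<noteq> 0" "poly (map_poly of_int Q) r = 0"
  shows "\<exists>p. is_primitive_poly r p"
proof -
  define V where "V q \<longleftrightarrow> q \<noteq> 0 \<and> poly (map_poly of_int q) r = (0::complex)" for q :: "int poly"
  obtain p0 where p0: "V p0" and p0_min: "\<And>q. V q \<Longrightarrow> degree p0 \<le> degree q"
    using ex_has_least_nat[of V Q degree] assms by (auto simp: V_def)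
  obtain p where p: "V p" "degree p = degree p0"
    and p_min: "\<And>q. V q \<Longrightarrow> degree q = degree p0 \<Longrightarrow> nat \<bar>lead_coeff p\<bar> \<le> nat \<bar>lead_coeff q\<bar>"
    using ex_has_least_nat[of "\<lambda>q. V q \<and> degree q = degree p0" p0 "\<lambda>q. nat \<bar>lead_coeff q\<bar>"] p0
    by blast
  have "is_primitive_poly r p"
    unfolding is_primitive_poly_def
  proof (intro conjI allI impI)
    show "p \<noteq> 0" "poly (map_poly of_int p) r = 0" using p(1) by (simp_all add: V_def)
    fix q assume "q \<noteq> 0 \<and> poly (map_poly of_int q) r = 0"
    then have "V q" by (simp add: V_def)
    then show "degree p \<le> degree q" using p0_min p(2) by simp
    assume "degree q = degree p"
    then show "\<bar>lead_coeff p\<bar> \<le> \<bar>lead_coeff q\<bar>" using p_min[OF \<open>V q\<close>] p(2) by simp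
  qed
  then show ?thesis ..
qed

lemma is_primitive_poly_content:
  assumes "is_primitive_poly r p"
  shows "content p = 1"
proof (rule ccontr)
  assume "content p \<noteq> 1"
  have p0: "p \<noteq> 0" and pr: "poly (map_poly of_int p) r = 0"
    using assms by (auto simp: is_primitive_poly_def)
  then have "content p > 0"
    using content_eq_zero_iff[of p] content_ge_0_int[of p] by linarith
  with \<open>content p \<noteq> 1\<close> have c2: "content p \<ge> 2" by linarith
  define q where "q = primitive_part p"
  have p_eq: "p = Polynomial.smult (content p) q" unfolding q_def by simp
  then have q0: "q \<noteq> 0" using p0 by auto
  have "of_int (content p) * poly (map_poly of_int q) r = (0::complex)"
    using pr by (subst (asm) p_eq) (simp add: hom_distribs)
  then have "poly (map_poly of_int q) r = 0" using c2 p0 by simp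
  moreover have "degree q = degree p" unfolding q_def by simp
  ultimately have "\<bar>lead_coeff p\<bar> \<le> \<bar>lead_coeff q\<bar>"
    using assms q0 unfolding is_primitive_poly_def by auto
  moreover have "lead_coeff p = content p * lead_coeff q" by (metis lead_coeff_smult p_eq)
  then have "\<bar>lead_coeff p\<bar> = content p * \<bar>lead_coeff q\<bar>" using c2 by (simp add: abs_mult)
  moreover have "\<bar>lead_coeff q\<bar> \<ge> 1" using q0 by (simp add: int_one_le_iff_zero_less)
  moreover have "2 * \<bar>lead_coeff q\<bar> \<le> content p * \<bar>lead_coeff q\<bar>"
    using c2 by (intro mult_right_mono) simp_all
  ultimately show False by linarith
qed

text \<open>The primitive polynomial is the minimal polynomial up to sign: the pseudo-remainder of
  any annihilating polynomial by it vanishes at \<open>r\<close> and has smaller degree, hence is zero.\<close>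

lemma is_primitive_poly_dvd:
  assumes p: "is_primitive_poly r p" and Qr: "poly (map_poly of_int Q) r = 0"
  shows "p dvd Q"
proof -
  have p0: "p \<noteq> 0" and pr: "poly (map_poly of_int p) r = 0"
    using p by (auto simp: is_primitive_poly_def)
  obtain a q where a: "a \<noteq> 0" "Polynomial.smult a Q = p * q + pseudo_mod Q p"
    and deg: "pseudo_mod Q p = 0 \<or> degree (pseudo_mod Q p) < degree p"
    using pseudo_mod[OF p0, of Q] by blast
  have "poly (map_poly of_int (Polynomial.smult a Q)) r = 0"
    using Qr by (simp add: hom_distribs)
  then have "poly (map_poly of_int (pseudo_mod Q p)) r = 0"
    using pr by (simp only: a(2)) (simp add: hom_distribs)
  then have "pseudo_mod Q p = 0"
    using p deg unfolding is_primitive_poly_def by (metis leD)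
  with a have "p dvd Polynomial.smult a Q" by simp
  then have "primitive_part p dvd Q" by (rule dvd_smult_int[OF a(1)])
  then show ?thesis using is_primitive_poly_content[OF p] by (simp add: primitive_part_prim)
qed

lemma dvd_coeff_le_l2norm:
  fixes f g :: "int poly"
  assumes "f \<noteq> 0" "g dvd f"
  shows "real_of_int \<bar>Polynomial.coeff g i\<bar> \<le> 2 ^ degree g * l2norm_complex (map_poly of_int f)"
proof -
  have "real_of_int \<bar>Polynomial.coeff g i\<bar> \<le> real (degree g choose i) * mahler_measure g"
    by (rule Mignotte_bound)
  also have "\<dots> \<le> 2 ^ degree g * mahler_measure f"
  proof (rule mult_mono)
    show "real (degree g choose i) \<le> 2 ^ degree g"
    proof -
      have "real (degree g choose i) \<le> real (2 ^ degree g)"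
        using binomial_le_pow2[of "degree g" i] by (simp only: of_nat_le_iff)
      then show ?thesis by simp
    qed
    show "mahler_measure g \<le> mahler_measure f" by (rule mahler_measure_dvd[OF assms])
  qed (auto simp: mahler_measure_ge_0)
  also have "mahler_measure f \<le> l2norm_complex (map_poly of_int f)"
    unfolding mahler_measure_def by (rule Landau_inequality)
  finally show ?thesis by simp
qed

lemma l2norm_complex_le_coeff_bound:
  fixes q :: "int poly"
  assumes "\<And>i. real_of_int \<bar>Polynomial.coeff q i\<bar> \<le> M" "0 \<le> M"
  shows "l2norm_complex (map_poly of_int q) \<le> sqrt (real (degree q + 1)) * M"
proof (cases "q = 0")
  case True
  then show ?thesis using assms by simp
next
  case False
  have "norm2 (map_poly (of_int :: int \<Rightarrow> complex) q) = (\<Sum>i<Suc (degree q). (real_of_int (Polynomial.coeff q i))\<^sup>2)"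
    using False by (simp add: coeffs_def o_def coeff_map_poly sum_list_distinct_conv_sum_set
        atLeast0LessThan)
  also have "\<dots> \<le> (\<Sum>i<Suc (degree q). M\<^sup>2)"
    using assms by (intro sum_mono) (metis abs_le_square_iff abs_of_nonneg of_int_abs)
  finally have "l2norm_complex (map_poly (of_int :: int \<Rightarrow> complex) q) \<le> sqrt (real (degree q + 1) * M\<^sup>2)"
    by (intro real_sqrt_le_mono) simp
  also have "\<dots> = sqrt (real (degree q + 1)) * M" using assms(2) by (simp add: real_sqrt_mult)
  finally show ?thesis .
qed

lemma int_poly_height_le:
  assumes "\<And>i. real_of_int \<bar>Polynomial.coeff p i\<bar> \<le> M"
  shows "real_of_int (int_poly_height p) \<le> M"
proof -
  have "Max {\<bar>Polynomial.coeff p i\<bar> | i. i \<le> degree p} \<in> {\<bar>Polynomial.coeff p i\<bar> | i. i \<le> degree p}"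
    by (intro Max_in finite_image_set) auto
  then show ?thesis unfolding int_poly_height_def using assms by auto
qed

lemma primitive_poly_height_le:
  fixes Q :: "int poly" and r :: complex
  assumes "Q \<noteq> 0" "poly (map_poly of_int Q) r = 0" "degree Q \<le> k"
    and Q_coeff: "\<And>i. real_of_int \<bar>Polynomial.coeff Q i\<bar> \<le> M"
  shows "\<exists>p. is_primitive_poly r p \<and> degree p \<le> k \<and>
            real_of_int (int_poly_height p) \<le> 2 ^ k * (real k + 1) * M"
proof -
  obtain p where p: "is_primitive_poly r p" using is_primitive_poly_exists[OF assms(1,2)] ..
  have "degree p \<le> k" using p assms(1-3) unfolding is_primitive_poly_def by force
  have "M \<ge> 0" using Q_coeff[of 0] by linarith
  have "real (degree Q + 1) \<le> real k + 1" using assms(3) by simp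
  also have "\<dots> \<le> (real k + 1)^2" by (rule self_le_power) simp_all
  finally have "sqrt (real (degree Q + 1)) \<le> sqrt ((real k + 1)^2)" by (rule real_sqrt_le_mono)
  then have sqrt_le: "sqrt (real (degree Q + 1)) \<le> real k + 1" by simp
  have "real_of_int \<bar>Polynomial.coeff p i\<bar> \<le> 2 ^ k * (real k + 1) * M" for i
  proof -
    have "real_of_int \<bar>Polynomial.coeff p i\<bar> \<le> 2 ^ degree p * l2norm_complex (map_poly of_int Q)"
      using dvd_coeff_le_l2norm[OF assms(1) is_primitive_poly_dvd[OF p assms(2)]] .
    also have "\<dots> \<le> 2 ^ k * (sqrt (real (degree Q + 1)) * M)"
    proof (rule mult_mono)
      show "(2::real) ^ degree p \<le> 2 ^ k" using \<open>degree p \<le> k\<close> by (rule power_increasing) simp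
      show "l2norm_complex (map_poly of_int Q) \<le> sqrt (real (degree Q + 1)) * M"
        using Q_coeff \<open>M \<ge> 0\<close> by (rule l2norm_complex_le_coeff_bound)
    qed (auto intro!: real_sqrt_ge_zero sum_list_nonneg)
    also have "\<dots> \<le> 2 ^ k * ((real k + 1) * M)"
      using sqrt_le \<open>M \<ge> 0\<close> by (intro mult_left_mono mult_right_mono) auto
    finally show ?thesis by simp
  qed
  then show ?thesis using p \<open>degree p \<le> k\<close> int_poly_height_le by blast
qed

lemma coeff_prod_linear_nonneg:
  fixes c :: "'a \<Rightarrow> nat"
  shows "0 \<le> Polynomial.coeff (\<Prod>j\<in>S. [:int (c j), 1:]) i"
proof (induction S arbitrary: i rule: infinite_finite_induct)
  case (insert x F)
  then show ?case by (auto simp: coeff_pCons split: nat.split)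
qed (simp_all add: coeff_1)

lemma coeff_prod_linear_le:
  fixes c :: "'a \<Rightarrow> nat"
  shows "Polynomial.coeff (\<Prod>j\<in>S. [:int (c j), 1:]) i \<le> (\<Prod>j\<in>S. 1 + int (c j))"
proof (cases "i \<le> degree (\<Prod>j\<in>S. [:int (c j), 1:])")
  case True
  let ?P = "\<Prod>j\<in>S. [:int (c j), 1:]"
  have "Polynomial.coeff ?P i \<le> (\<Sum>j\<le>degree ?P. Polynomial.coeff ?P j)"
    using True coeff_prod_linear_nonneg by (intro member_le_sum) auto
  also have "\<dots> = poly ?P 1" by (simp add: poly_altdef)
  also have "\<dots> = (\<Prod>j\<in>S. 1 + int (c j))" by (simp add: poly_prod add.commute)
  finally show ?thesis .
next
  case False
  then show ?thesis by (simp add: coeff_eq_0 prod_nonneg)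
qed

text \<open>Both products have coefficients in \<open>[0, N^card S]\<close>, hence so does the absolute value
  of their difference.\<close>

lemma abs_coeff_prod_linear_diff_le:
  fixes c d :: "'a \<Rightarrow> nat"
  assumes "\<And>j. j \<in> S \<Longrightarrow> c j < N" "\<And>j. j \<in> S \<Longrightarrow> d j < N"
  shows "\<bar>Polynomial.coeff ((\<Prod>j\<in>S. [:int (c j), 1:]) - (\<Prod>j\<in>S. [:int (d j), 1:])) i\<bar>
           \<le> int N ^ card S"
proof -
  have "Polynomial.coeff (\<Prod>j\<in>S. [:int (e j), 1:]) i \<le> int N ^ card S"
    if "\<And>j. j \<in> S \<Longrightarrow> e j < N" for e :: "'a \<Rightarrow> nat"
  proof -
    have "(\<Prod>j\<in>S. 1 + int (e j)) \<le> (\<Prod>j\<in>S. int N)"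
      using that by (intro prod_mono) force
    then show ?thesis using coeff_prod_linear_le[of e S i] by simp
  qed
  then have "Polynomial.coeff (\<Prod>j\<in>S. [:int (c j), 1:]) i \<le> int N ^ card S"
    "Polynomial.coeff (\<Prod>j\<in>S. [:int (d j), 1:]) i \<le> int N ^ card S"
    using assms by blast+
  then show ?thesis
    using coeff_prod_linear_nonneg[of c S i] coeff_prod_linear_nonneg[of d S i] by simp
qed

lemma Suc_Suc_mod_neq:
  fixes i m :: nat
  assumes "3 \<le> m" "i < m"
  shows "Suc (Suc i mod m) mod m \<noteq> i"
proof -
  have "Suc (Suc i mod m) mod m = Suc (Suc i) mod m" by (simp add: mod_Suc_eq)
  moreover have "Suc (Suc i) mod m \<noteq> i"
  proof (cases "Suc (Suc i) < m")
    case False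
    then have "Suc (Suc i) mod m = Suc (Suc i) - m"
      using assms by (simp add: le_mod_geq not_less)
    then show ?thesis using assms False by arith
  qed simp
  ultimately show ?thesis by simp
qed

lemma cycle_edges_inj:
  fixes w :: "nat \<Rightarrow> 'v"
  assumes w: "inj_on w {..<m}" and "3 \<le> m" "i < m" "j < m"
    and edge: "{w i, w (Suc i mod m)} = {w j, w (Suc j mod m)}"
  shows "i = j"
proof -
  have "Suc i mod m < m" "Suc j mod m < m" using assms by simp_all
  then have eq: "w x = w y \<longleftrightarrow> x = y"
    if "x \<in> {i, j, Suc i mod m, Suc j mod m}" "y \<in> {i, j, Suc i mod m, Suc j mod m}" for x y
    using that w assms(3,4) by (auto simp: inj_on_def)
  from edge consider "w i = w j" | "w i = w (Suc j mod m)" "w (Suc i mod m) = w j"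
    by (auto simp: doubleton_eq_iff)
  then show ?thesis
  proof cases
    case 2
    then have "Suc j mod m = i" "Suc i mod m = j" using eq by simp_all
    then show ?thesis using Suc_Suc_mod_neq[OF assms(2,3)] by simp
  qed (simp add: eq)
qed

lemma containment_adj_iff_edge:
  "containment_adj A rep u v \<longleftrightarrow> (\<exists>a\<in>A. {u, v} = {Inl (fst (rep a)), Inr (snd (rep a))})"
  unfolding containment_adj_def doubleton_eq_iff by blast

text \<open>Here \<open>b i\<close> is the element of \<open>B\<close> sitting at the \<open>i\<close>-th vertex of the cycle and \<open>a i\<close>
  the element of \<open>A\<close> labelling its \<open>i\<close>-th edge.\<close>

lemma containment_cycle_edge_labels:
  assumes rep: "\<forall>a\<in>A. fst (rep a) * snd (rep a) = a"
    and cycle: "has_cycle_of_length (containment_adj A rep) m"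
  shows "\<exists>a b. inj_on a {..<m} \<and> (\<forall>i<m. a i \<in> A \<and> a i = b i * b (Suc i mod m))"
proof -
  obtain w where "3 \<le> m" and w: "inj_on w {..<m}"
    and adj: "\<And>i. i < m \<Longrightarrow> containment_adj A rep (w i) (w (Suc i mod m))"
    using cycle unfolding has_cycle_of_length_def by blast
  define edge where "edge i x \<longleftrightarrow> x \<in> A \<and>
      {w i, w (Suc i mod m)} = {Inl (fst (rep x)), Inr (snd (rep x))}" for i x
  define a where "a i = (SOME x. edge i x)" for i
  define b where "b i = case_sum id id (w i)" for i
  have a: "a i \<in> A" "{w i, w (Suc i mod m)} = {Inl (fst (rep (a i))), Inr (snd (rep (a i)))}"
    if "i < m" for i
    using someI_ex[of "edge i"] adj[OF that]
    unfolding a_def edge_def containment_adj_iff_edge by blast+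
  have "a i = b i * b (Suc i mod m)" if "i < m" for i
  proof -
    from a(2)[OF that]
    have "b i * b (Suc i mod m) = fst (rep (a i)) * snd (rep (a i))"
      unfolding doubleton_eq_iff by (elim disjE) (simp_all add: b_def mult.commute)
    then show ?thesis using rep a(1)[OF that] by simp
  qed
  moreover have "inj_on a {..<m}"
  proof (rule inj_onI)
    fix i j assume "i \<in> {..<m}" "j \<in> {..<m}" "a i = a j"
    then show "i = j"
      using a(2)[of i] a(2)[of j] cycle_edges_inj[OF w \<open>3 \<le> m\<close>, of i j] by simp
  qed
  ultimately show ?thesis using a(1) by blast
qed

lemma prod_lessThan_Suc_mod:
  assumes "0 < k"
  shows "(\<Prod>j<k. g (Suc j mod k)) = (\<Prod>j<k. g j :: 'a :: comm_monoid_mult)"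
proof -
  obtain k' where k: "k = Suc k'" using assms by (cases k) auto
  have "(\<Prod>j<Suc k'. g (Suc j mod Suc k')) = (\<Prod>j<k'. g (Suc j)) * g 0"
    by (simp add: prod.lessThan_Suc)
  also have "\<dots> = (\<Prod>j<Suc k'. g j)"
    by (metis prod.lessThan_Suc_shift mult.commute)
  finally show ?thesis using k by simp
qed

lemma prod_even_odd_cycle_edges:
  fixes b :: "nat \<Rightarrow> 'a :: comm_monoid_mult"
  assumes "0 < k"
  shows "(\<Prod>j<k. b (2*j) * b (2*j+1)) = (\<Prod>j<k. b (2*j+1) * b (Suc (2*j+1) mod (2*k)))"
proof -
  have "Suc (2*j+1) mod (2*k) = 2 * (Suc j mod k)" for j
    by (simp add: mod_mult_mult1[symmetric])
  then have "(\<Prod>j<k. b (2*j+1) * b (Suc (2*j+1) mod (2*k)))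
      = (\<Prod>j<k. b (2*j+1)) * (\<Prod>j<k. b (2 * (Suc j mod k)))"
    by (simp add: prod.distrib)
  also have "\<dots> = (\<Prod>j<k. b (2*j+1)) * (\<Prod>j<k. b (2*j))"
    using prod_lessThan_Suc_mod[OF assms, of "\<lambda>j. b (2*j)"] by simp
  finally show ?thesis by (simp add: prod.distrib mult.commute)
qed

lemma cycle_annihilating_poly:
  fixes r :: complex and b :: "nat \<Rightarrow> complex" and n :: "nat \<Rightarrow> nat"
  assumes "0 < k" and n_inj: "inj_on n {..<2*k}" and n_less: "\<And>i. i < 2*k \<Longrightarrow> n i < N"
    and edge: "\<And>i. i < 2*k \<Longrightarrow> r + of_nat (n i) = b i * b (Suc i mod (2*k))"
  shows "\<exists>Q :: int poly. Q \<noteq> 0 \<and> poly (map_poly of_int Q) r = 0 \<and> degree Q \<le> k \<and>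
           (\<forall>i. \<bar>Polynomial.coeff Q i\<bar> \<le> int N ^ k)"
proof -
  define Pe :: "int poly" where "Pe = (\<Prod>j<k. [:int (n (2*j)), 1:])"
  define Po :: "int poly" where "Po = (\<Prod>j<k. [:int (n (2*j+1)), 1:])"
  have "poly (map_poly of_int Pe) r = (\<Prod>j<k. b (2*j) * b (2*j+1))"
    unfolding Pe_def using edge by (simp add: hom_distribs poly_prod add.commute)
  also have "\<dots> = (\<Prod>j<k. b (2*j+1) * b (Suc (2*j+1) mod (2*k)))"
    by (rule prod_even_odd_cycle_edges[OF assms(1)])
  also have "\<dots> = poly (map_poly of_int Po) r"
    unfolding Po_def using edge by (simp add: hom_distribs poly_prod add.commute)
  finally have root: "poly (map_poly of_int (Pe - Po)) r = 0" by (simp add: hom_distribs)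
  have "poly Pe (- int (n 0)) = 0"
    unfolding Pe_def poly_prod using assms(1) by (auto intro!: bexI[of _ 0])
  moreover have "n (2*j+1) \<noteq> n 0" if "j < k" for j
    using inj_onD[OF n_inj, of "2*j+1" 0] that by auto
  then have "poly Po (- int (n 0)) \<noteq> 0"
    unfolding Po_def poly_prod by simp
  ultimately have "Pe - Po \<noteq> 0" by auto
  moreover have "degree (Pe - Po) \<le> k"
    unfolding Pe_def Po_def
    by (intro degree_diff_le order.trans[OF degree_prod_sum_le]) simp_all
  moreover have "\<bar>Polynomial.coeff (Pe - Po) i\<bar> \<le> int N ^ k" for i
    using abs_coeff_prod_linear_diff_le[of "{..<k}" "\<lambda>j. n (2*j)" N "\<lambda>j. n (2*j+1)"] n_less
    unfolding Pe_def Po_def by simp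
  ultimately show ?thesis using root by blast
qed

theorem lemma3:
  fixes k :: nat
  assumes "0 < k"
  shows "\<exists>C::real. C > 0 \<and>
    (\<forall>(r::complex) (N::nat) (B::complex set) (rep::complex \<Rightarrow> complex \<times> complex).
       let A = {r + of_nat i | i. i < N} in
       0 < N \<longrightarrow> finite B \<longrightarrow>
       A \<subseteq> {b * b' | b b'. b \<in> B \<and> b' \<in> B} \<longrightarrow>
       (\<forall>a\<in>A. fst (rep a) \<in> B \<and> snd (rep a) \<in> B \<and> fst (rep a) * snd (rep a) = a) \<longrightarrow>
       has_cycle_of_length (containment_adj A rep) (2 * k) \<longrightarrow>
       (\<exists>p. is_primitive_poly r p \<and> degree p \<le> k \<and>
            real_of_int (int_poly_height p) \<le> C * real N ^ k))"
proof (intro exI[of _ "2 ^ k * (real k + 1)"] conjI allI impI, simp, unfold Let_def, intro impI)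
  fix r :: complex and N :: nat and B rep
  let ?A = "{r + of_nat i | i. i < N}"
  assume "\<forall>a\<in>?A. fst (rep a) \<in> B \<and> snd (rep a) \<in> B \<and> fst (rep a) * snd (rep a) = a"
    and "has_cycle_of_length (containment_adj ?A rep) (2 * k)"
  then obtain a b where a_inj: "inj_on a {..<2*k}"
    and a: "\<And>i. i < 2*k \<Longrightarrow> a i \<in> ?A \<and> a i = b i * b (Suc i mod (2*k))"
    using containment_cycle_edge_labels[of ?A rep "2*k"] by auto
  obtain n where n: "\<And>i. i < 2*k \<Longrightarrow> n i < N \<and> a i = r + of_nat (n i)"
    using a by simp metis
  have "inj_on n {..<2*k}"
    using a_inj n by (auto simp: inj_on_def)
  then obtain Q :: "int poly" where Q: "Q \<noteq> 0" "poly (map_poly of_int Q) r = 0" "degree Q \<le> k"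
    and Q_coeff: "\<And>i. \<bar>Polynomial.coeff Q i\<bar> \<le> int N ^ k"
    using cycle_annihilating_poly[OF assms, of n N r b] n a by metis
  have "real_of_int \<bar>Polynomial.coeff Q i\<bar> \<le> real N ^ k" for i
    using Q_coeff[of i] by (metis of_int_le_iff of_int_of_nat_eq of_int_power)
  then show "\<exists>p. is_primitive_poly r p \<and> degree p \<le> k \<and>
      real_of_int (int_poly_height p) \<le> 2 ^ k * (real k + 1) * real N ^ k"
    by (rule primitive_poly_height_le[OF Q])
qed

end
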